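(* Under all the hypotheses of the following setting: $C\subseteq\mathbb{R}^n$ nonempty closed convex; $F$ continuously differentiable; $x^*$ a solution of VIP$(F,C)$; a neighborhood $X$ of $x^*$ and constants $L_1,L_2,\mu>0$ with $\|F(x)-F(y)\|\le L_1\|x-y\|$, $\|\nabla F(x)-\nabla F(y)\|\le L_2\|x-y\|$ for $x,y\in X$ and $\langle\nabla F(x)d,d\rangle\ge\mu\|d\|^2$ for $x\in X$, $d\in\mathbb{R}^n$; sequences $\{x_k\}\subset C$ with $x_k\to x^*$, $B_k$, $\mu_k>0$, $\rho_k\ge0$, $\delta_k>0$, inexact solutions $z_k\in C$ and exact solutions $\hat z_k$ of VIP$(\varphi_k,C)$; and constants $D,C_1,C_2>0$ such that for all sufficiently large $k$: $\|B_k-\nabla F(x_k)\|\le D$; $\mu_k=O(r_k)$, $\mu_k\le C_1\|x_k-x^*\|$, $\rho_k\to0$; $B_k+\mu_kI$ positive definite with $(1+\|B_k+\mu_kI\|)/c_k\le C_2$; $\|(B_k-\nabla F(x_k))(z_k-x_k)\|\le\delta_k\|z_k-x_k\|$, $\mu_k<\mu/2$, $\delta_k\le\mu/16$. Then for every $\alpha>0$ there exist constants $L_1',L_2',L_3',L_4',L_5'>0$ such that for all sufficiently large $k$, $$f_\alpha(z_k)\le L_1'\|x_k-x^*\|^4+(L_2'\delta_k+L_3')\|x_k-x^*\|^3+(L_4'\delta_k+L_5'\delta_k^2)\|x_k-x^*\|^2.$$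
   Context: VIP$(F,C)$: find $x^*\in C$ with $\langle F(x^* ),x-x^*\rangle\ge0$ for all $x\in C$. $P_C$ is the Euclidean projection onto $C$. $r_k=\|x_k-P_C(x_k-F(x_k))\|$. For $\alpha>0$ the merit function is $f_\alpha(x)=\max_{y\in C}\{-\langle F(x),y-x\rangle-\tfrac{\alpha}{2}\|y-x\|^2\}$. For each $k$, $\varphi_k(z)=F(x_k)+(B_k+\mu_kI)(z-x_k)$; $\hat z_k\in C$ is the unique solution of VIP$(\varphi_k,C)$: $\langle\varphi_k(\hat z_k),x-\hat z_k\rangle\ge0$ for all $x\in C$. With $e_k=z_k-P_C(z_k-\varphi_k(z_k))$, the inexact solutions $z_k\in C$ satisfy $\|e_k\|\le\rho_k\mu_k\|z_k-x_k\|$ and $\langle e_k,\varphi_k(z_k)+z_k-x_k\rangle\le\rho_k\mu_k\|z_k-x_k\|^2$. $c_k$ is the smallest eigenvalue of the symmetric part of $B_k+\mu_kI$. *)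

theory Defs
  imports "HOL-Analysis.Analysis" "HOL-Library.Landau_Symbols"
begin

definition vip_sol :: "('a::real_inner \<Rightarrow> 'a) \<Rightarrow> 'a set \<Rightarrow> 'a \<Rightarrow> bool" where
  "vip_sol F C xs \<longleftrightarrow> xs \<in> C \<and> (\<forall>y\<in>C. F xs \<bullet> (y - xs) \<ge> 0)"

definition mnorm :: "real^'n^'n \<Rightarrow> real" where
  "mnorm A = onorm (\<lambda>v. A *v v)"

definition pos_def :: "real^'n^'n \<Rightarrow> bool" where
  "pos_def A \<longleftrightarrow> (\<forall>d. d \<noteq> 0 \<longrightarrow> d \<bullet> (A *v d) > 0)"

definition min_eig_sym :: "real^'n^'n \<Rightarrow> real" where
  "min_eig_sym A = Min {l. \<exists>v. v \<noteq> 0 \<and> ((1/2) *\<^sub>R (A + transpose A)) *v v = l *\<^sub>R v}"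

definition resid :: "('a::euclidean_space \<Rightarrow> 'a) \<Rightarrow> 'a set \<Rightarrow> 'a \<Rightarrow> real" where
  "resid F C x = norm (x - closest_point C (x - F x))"

definition merit :: "('a::real_inner \<Rightarrow> 'a) \<Rightarrow> 'a set \<Rightarrow> real \<Rightarrow> 'a \<Rightarrow> real" where
  "merit F C \<alpha> x = (SUP y\<in>C. - (F x \<bullet> (y - x)) - (\<alpha> / 2) * (norm (y - x))^2)"

end

theory Submission
  imports Defs
begin

(*
  Near x* the Jacobian is uniformly strongly monotone, so once mu_k and delta_k are small the
  regularised model B_k + mu_k I is coercive and bounded along d_k = z_k - x_k.  The projection
  inequality for P_C(z_k - phi_k(z_k)) = z_k - e_k tested at x*, added to the variational
  inequality at x* tested at z_k - e_k, gives the error bound ||d_k|| <= K ||x_k - x*|| as soon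
  as rho_k mu_k is small.  Tested at an arbitrary y in C, the same projection inequality bounds
  f_alpha(z_k) by 2 rho_k mu_k ||d_k||^2 + (||e_k|| + ||F(z_k) - phi_k(z_k)||)^2 / (2 alpha); the
  Lipschitz Jacobian, the accuracy of B_k and mu_k <= C1 ||x_k - x*|| make both residuals
  O(||x_k - x*||^2 + delta_k ||x_k - x*||).
*)

lemma mat_mulv [simp]: "mat c *v (x::real^'n) = c *\<^sub>R x"
  by (simp add: vec_eq_iff matrix_vector_mult_def mat_def if_distrib[where f="\<lambda>a. a * _"] cong: if_cong)

lemma norm_mulv_le_mnorm: "norm (A *v v) \<le> mnorm A * norm v"
  unfolding mnorm_def by (rule onorm[OF matrix_vector_mul_bounded_linear])

lemma mnorm_nonneg: "0 \<le> mnorm A"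
  unfolding mnorm_def by (rule onorm_pos_le[OF matrix_vector_mul_bounded_linear])

lemma mnorm_add_le: "mnorm (A + B) \<le> mnorm A + mnorm B"
  unfolding mnorm_def matrix_vector_mult_add_rdistrib
  by (intro onorm_triangle matrix_vector_mul_bounded_linear)

lemma regularized_model_split:
  "(B + mat m) *v d = J *v d + (B - J) *v d + m *\<^sub>R d"
  by (simp add: matrix_vector_mult_add_rdistrib matrix_vector_mult_diff_rdistrib)

lemma regularized_model_coercive:
  fixes J B :: "real^'n^'n"
  assumes "\<mu> * (norm d)\<^sup>2 \<le> (J *v d) \<bullet> d"
    and "norm ((B - J) *v d) \<le> \<delta> * norm d" "\<delta> \<le> \<mu> / 2" "0 \<le> m"
  shows "\<mu> / 2 * (norm d)\<^sup>2 \<le> ((B + mat m) *v d) \<bullet> d"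
proof -
  have "- (((B - J) *v d) \<bullet> d) \<le> \<delta> * norm d * norm d"
    using norm_cauchy_schwarz[of "- ((B - J) *v d)" d] mult_right_mono[OF assms(2), of "norm d"] by simp
  also have "\<dots> \<le> \<mu> / 2 * (norm d)\<^sup>2"
    using mult_right_mono[OF assms(3), of "(norm d)\<^sup>2"] by (simp add: power2_eq_square mult.assoc)
  finally have "- (((B - J) *v d) \<bullet> d) \<le> \<mu> / 2 * (norm d)\<^sup>2" .
  moreover have "0 \<le> (m *\<^sub>R d) \<bullet> d"
    using \<open>0 \<le> m\<close> by simp
  ultimately show ?thesis
    using assms(1) unfolding regularized_model_split[of B m d J] inner_add_left by linarith
qed

lemma regularized_model_bounded:
  fixes J B :: "real^'n^'n"
  assumes "norm ((B - J) *v d) \<le> \<delta> * norm d" "0 \<le> m"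
  shows "norm ((B + mat m) *v d) \<le> (mnorm J + \<delta> + m) * norm d"
proof -
  have "norm ((B + mat m) *v d) \<le> norm (J *v d) + norm ((B - J) *v d) + norm (m *\<^sub>R d)"
    unfolding regularized_model_split[of B m d J] by (meson norm_triangle_ineq add_right_mono order_trans)
  then show ?thesis
    using norm_mulv_le_mnorm[of J d] assms by (simp add: algebra_simps)
qed

lemma le_of_quadratic_le:
  fixes a n c P Q :: real
  assumes quad: "c * n\<^sup>2 \<le> P * a * n + Q * a\<^sup>2"
    and "c > 0" "0 \<le> a" "0 \<le> n" "0 \<le> Q"
  shows "n \<le> max 1 ((P + Q) / c) * a"
proof (cases "n \<le> a")
  case True
  then show ?thesis
    using \<open>0 \<le> a\<close> mult_right_mono[OF max.cobounded1, of a 1 "(P + Q) / c"] by linarith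
next
  case False
  then have "Q * a\<^sup>2 \<le> Q * a * n"
    using \<open>0 \<le> a\<close> \<open>0 \<le> Q\<close> by (simp add: power2_eq_square mult_left_mono mult.assoc)
  with quad have "(c * n) * n \<le> ((P + Q) * a) * n"
    by (simp add: power2_eq_square algebra_simps)
  then have "c * n \<le> (P + Q) * a"
    using False \<open>0 \<le> a\<close> by (simp add: mult_le_cancel_right)
  then have "n \<le> (P + Q) / c * a"
    using \<open>c > 0\<close> by (simp add: field_simps)
  then show ?thesis
    using \<open>0 \<le> a\<close> mult_right_mono[OF max.cobounded2, of a "(P + Q) / c" 1] by linarith
qed

lemma mult_minus_half_square_le:
  fixes t q \<alpha> :: real
  assumes "\<alpha> > 0"
  shows "t * q - \<alpha> / 2 * q\<^sup>2 \<le> t\<^sup>2 / (2 * \<alpha>)"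
proof -
  have "2 * \<alpha> * (t * q - \<alpha> / 2 * q\<^sup>2) \<le> t\<^sup>2"
    using zero_le_power2[of "t - \<alpha> * q"] by (simp add: power2_eq_square algebra_simps)
  then show ?thesis
    using assms by (simp add: field_simps)
qed

lemma polynomial_bound_of_step_estimates:
  fixes f s n t a K C1 L \<delta> m \<alpha> :: real
  assumes f: "f \<le> 2 * s * n\<^sup>2 + t\<^sup>2 / (2 * \<alpha>)"
    and "0 \<le> t" "t \<le> s * n + L * n\<^sup>2 + \<delta> * n + m * n"
    and "0 \<le> n" "n \<le> K * a" "0 \<le> s" "s \<le> C1 * a" "0 \<le> m" "m \<le> C1 * a"
    and "0 \<le> \<delta>" "0 \<le> L" "\<alpha> > 0"
  defines "G \<equiv> 2 * C1 * K + L * K\<^sup>2"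
  shows "f \<le> G\<^sup>2 / (2 * \<alpha>) * a ^ 4 + (G * K / \<alpha> * \<delta> + 2 * C1 * K\<^sup>2) * a ^ 3
              + K\<^sup>2 / (2 * \<alpha>) * \<delta>\<^sup>2 * a\<^sup>2"
proof -
  have "0 \<le> C1 * a"
    using \<open>0 \<le> s\<close> \<open>s \<le> C1 * a\<close> by linarith
  have n2: "n\<^sup>2 \<le> K\<^sup>2 * a\<^sup>2"
    using power_mono[OF \<open>n \<le> K * a\<close> \<open>0 \<le> n\<close>, of 2] by (simp add: power_mult_distrib)
  have "s * n\<^sup>2 \<le> (C1 * a) * (K\<^sup>2 * a\<^sup>2)"
    using mult_mono[OF \<open>s \<le> C1 * a\<close> n2 \<open>0 \<le> C1 * a\<close>] by simp
  then have first: "2 * s * n\<^sup>2 \<le> 2 * C1 * K\<^sup>2 * a ^ 3"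
    by (simp add: power2_eq_square power3_eq_cube algebra_simps)
  have "s * n \<le> C1 * a * (K * a)" "m * n \<le> C1 * a * (K * a)"
    using mult_mono[OF \<open>s \<le> C1 * a\<close> \<open>n \<le> K * a\<close>] mult_mono[OF \<open>m \<le> C1 * a\<close> \<open>n \<le> K * a\<close>]
      \<open>0 \<le> C1 * a\<close> \<open>0 \<le> n\<close> by auto
  moreover have "L * n\<^sup>2 \<le> L * (K\<^sup>2 * a\<^sup>2)" "\<delta> * n \<le> \<delta> * (K * a)"
    using mult_left_mono[OF n2 \<open>0 \<le> L\<close>] mult_left_mono[OF \<open>n \<le> K * a\<close> \<open>0 \<le> \<delta>\<close>] by auto
  ultimately have "t \<le> G * a\<^sup>2 + \<delta> * K * a"
    using \<open>t \<le> s * n + L * n\<^sup>2 + \<delta> * n + m * n\<close>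
    unfolding G_def by (simp add: power2_eq_square algebra_simps)
  then have "t\<^sup>2 / (2 * \<alpha>) \<le> (G * a\<^sup>2 + \<delta> * K * a)\<^sup>2 / (2 * \<alpha>)"
    using \<open>0 \<le> t\<close> \<open>\<alpha> > 0\<close> by (intro divide_right_mono power_mono) auto
  also have "\<dots> = G\<^sup>2 / (2 * \<alpha>) * a ^ 4 + G * K / \<alpha> * \<delta> * a ^ 3 + K\<^sup>2 / (2 * \<alpha>) * \<delta>\<^sup>2 * a\<^sup>2"
    using \<open>\<alpha> > 0\<close> by (simp add: field_simps power2_eq_square power3_eq_cube power4_eq_xxxx)
  finally show ?thesis
    using f first by (simp add: algebra_simps)
qed

text \<open>The projection inequality for \<open>closest_point C (z - (F x + v)) = z - e\<close> tested at \<open>xs\<close>,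
  plus the variational inequality at \<open>xs\<close> tested at \<open>z - e\<close>.\<close>
lemma inexact_projection_vi_inequality:
  fixes F :: "'a::euclidean_space \<Rightarrow> 'a"
  assumes "convex C" "closed C" "vip_sol F C xs"
    and e_def: "e = z - closest_point C (z - (F x + v))"
  shows "v \<bullet> (z - x) \<le> (F x - F xs) \<bullet> (xs - z + e) + v \<bullet> (xs - x + e) - e \<bullet> (xs - z + e)"
proof -
  define w where "w = closest_point C (z - (F x + v))"
  have "xs \<in> C" and F_xs: "\<forall>y\<in>C. 0 \<le> F xs \<bullet> (y - xs)"
    using \<open>vip_sol F C xs\<close> unfolding vip_sol_def by auto
  then have "w \<in> C"
    unfolding w_def using \<open>closed C\<close> by (auto intro: closest_point_in_set)
  have w_eq: "w = z - e" and xs_w: "xs - w = xs - z + e"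
    unfolding e_def w_def by simp_all
  have "(z - (F x + v) - w) \<bullet> (xs - w) \<le> 0"
    unfolding w_def using closest_point_dot[OF assms(1,2) \<open>xs \<in> C\<close>] .
  moreover have "0 \<le> F xs \<bullet> (w - xs)"
    using F_xs \<open>w \<in> C\<close> by blast
  ultimately show ?thesis
    unfolding xs_w w_eq
    by (simp add: algebra_simps)
qed

lemma inexact_step_length_le:
  fixes F :: "'a::euclidean_space \<Rightarrow> 'a"
  assumes "convex C" "closed C" "vip_sol F C xs"
    and e_def: "e = z - closest_point C (z - (F x + v))"
    and e_small: "norm e \<le> \<eta> * norm (z - x)" and "\<eta> \<le> 1" and \<eta>_M: "\<eta> * (M + 2) \<le> c / 2"
    and v_bounded: "norm v \<le> M * norm (z - x)"
    and v_coercive: "c * (norm (z - x))\<^sup>2 \<le> v \<bullet> (z - x)"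
    and F_lip_xs: "norm (F x - F xs) \<le> L * norm (x - xs)"
    and "c > 0" "0 \<le> L"
  shows "norm (z - x) \<le> max 1 (2 * (3 * L + M + 1) / c) * norm (x - xs)"
proof -
  define n a where "n = norm (z - x)" and "a = norm (x - xs)"
  define w where "w = xs - z + e"
  have "0 \<le> n" "0 \<le> a" and e_n: "norm e \<le> \<eta> * n" and e_n': "norm e \<le> n"
    using e_small \<open>\<eta> \<le> 1\<close> mult_right_mono[OF \<open>\<eta> \<le> 1\<close>, of n] unfolding n_def a_def by auto
  have "w = (xs - x) - (z - x) + e"
    unfolding w_def by simp
  then have "norm w \<le> a + n + norm e"
    using norm_triangle_ineq[of "(xs - x) - (z - x)" e] norm_triangle_ineq4[of "xs - x" "z - x"]
    unfolding a_def n_def by (simp add: norm_minus_commute)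
  then have w_bound: "norm w \<le> a + 2 * n"
    using e_n' by linarith
  have xs_x_e: "norm (xs - x + e) \<le> a + \<eta> * n"
    using norm_triangle_ineq[of "xs - x" e] e_n unfolding a_def by (simp add: norm_minus_commute)
  have "(F x - F xs) \<bullet> w \<le> L * a * (a + 2 * n)"
    using norm_cauchy_schwarz[of "F x - F xs" w] F_lip_xs w_bound \<open>0 \<le> L\<close> \<open>0 \<le> a\<close>
    unfolding a_def by (smt (verit) mult_mono norm_ge_zero)
  moreover have "v \<bullet> (xs - x + e) \<le> M * n * (a + \<eta> * n)"
    using norm_cauchy_schwarz[of v "xs - x + e"] v_bounded xs_x_e
    unfolding n_def by (smt (verit) mult_mono norm_ge_zero)
  moreover have "- (e \<bullet> w) \<le> \<eta> * n * (a + 2 * n)"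
    using norm_cauchy_schwarz[of "- e" w] e_n w_bound
    by (smt (verit) inner_minus_left mult_mono norm_ge_zero norm_minus_cancel)
  ultimately have "c * n\<^sup>2 \<le> L * a * (a + 2 * n) + M * n * (a + \<eta> * n) + \<eta> * n * (a + 2 * n)"
    using inexact_projection_vi_inequality[OF assms(1-3) e_def] v_coercive
    unfolding w_def n_def by linarith
  \<comment> \<open>\<open>\<eta> * (M + 2) \<le> c / 2\<close> absorbs all inexactness terms into half of the coercivity.\<close>
  moreover have "\<eta> * n * a \<le> n * a"
    using mult_right_mono[OF \<open>\<eta> \<le> 1\<close>, of "n * a"] \<open>0 \<le> n\<close> \<open>0 \<le> a\<close> by (simp add: mult.assoc)
  moreover have "\<eta> * (M + 2) * n\<^sup>2 \<le> c / 2 * n\<^sup>2"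
    using mult_right_mono[OF \<eta>_M, of "n\<^sup>2"] by simp
  ultimately have "c / 2 * n\<^sup>2 \<le> (2 * L + M + 1) * a * n + L * a\<^sup>2"
    by (simp add: algebra_simps power2_eq_square)
  from le_of_quadratic_le[OF this] \<open>c > 0\<close> \<open>0 \<le> a\<close> \<open>0 \<le> n\<close> \<open>0 \<le> L\<close>
  show ?thesis
    unfolding n_def a_def by (simp add: algebra_simps)
qed

lemma merit_le_inexact_residuals:
  fixes F :: "'a::euclidean_space \<Rightarrow> 'a"
  assumes "convex C" "closed C" "z \<in> C" "\<alpha> > 0"
    and e_def: "e = z - closest_point C (z - p)"
    and e_small: "norm e \<le> s * norm (z - x)"
    and e_dir: "e \<bullet> (p + z - x) \<le> s * (norm (z - x))\<^sup>2"
  shows "merit F C \<alpha> z \<le> 2 * s * (norm (z - x))\<^sup>2 + (norm e + norm (F z - p))\<^sup>2 / (2 * \<alpha>)"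
  unfolding merit_def
proof (rule cSUP_least)
  show "C \<noteq> {}"
    using \<open>z \<in> C\<close> by auto
next
  fix y assume "y \<in> C"
  define q n E where "q = y - z" and "n = norm (z - x)" and "E = F z - p"
  have "(z - p - closest_point C (z - p)) \<bullet> (y - closest_point C (z - p)) \<le> 0"
    using closest_point_dot[OF assms(1,2) \<open>y \<in> C\<close>] .
  then have "(e - p) \<bullet> (q + e) \<le> 0"
    unfolding e_def q_def by (simp add: algebra_simps)
  then have "e \<bullet> e + e \<bullet> q \<le> e \<bullet> p + p \<bullet> q"
    by (simp add: algebra_simps inner_commute)
  then have proj: "- (p \<bullet> q) \<le> p \<bullet> e - e \<bullet> q"
    using inner_ge_zero[of e] inner_commute[of p e] by linarith
  have "- (e \<bullet> (z - x)) \<le> s * n * n"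
    using norm_cauchy_schwarz[of "- e" "z - x"] mult_right_mono[OF e_small, of n]
    unfolding n_def by simp
  then have "p \<bullet> e \<le> 2 * s * n\<^sup>2"
    using e_dir unfolding n_def by (simp add: algebra_simps inner_commute power2_eq_square)
  then have "- (F z \<bullet> q) \<le> 2 * s * n\<^sup>2 - (e + E) \<bullet> q"
    using proj unfolding E_def by (simp add: algebra_simps)
  moreover have "- ((e + E) \<bullet> q) \<le> norm (e + E) * norm q"
    using norm_cauchy_schwarz[of "- (e + E)" q] by (simp only: inner_minus_left norm_minus_cancel)
  moreover have "norm (e + E) * norm q - \<alpha> / 2 * (norm q)\<^sup>2 \<le> (norm (e + E))\<^sup>2 / (2 * \<alpha>)"
    using mult_minus_half_square_le[OF \<open>\<alpha> > 0\<close>] .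
  moreover have "(norm (e + E))\<^sup>2 / (2 * \<alpha>) \<le> (norm e + norm E)\<^sup>2 / (2 * \<alpha>)"
    using \<open>\<alpha> > 0\<close> by (intro divide_right_mono power_mono norm_triangle_ineq) auto
  ultimately show "- (F z \<bullet> (y - z)) - \<alpha> / 2 * (norm (y - z))\<^sup>2
      \<le> 2 * s * (norm (z - x))\<^sup>2 + (norm e + norm (F z - p))\<^sup>2 / (2 * \<alpha>)"
    unfolding q_def E_def n_def by linarith
qed

lemma linearization_error_le:
  fixes F :: "real^'n \<Rightarrow> real^'n" and JF :: "real^'n \<Rightarrow> real^'n^'n"
  assumes F_deriv: "\<And>y. (F has_derivative (\<lambda>h. JF y *v h)) (at y)"
    and JF_lip: "\<And>u v. u \<in> X \<Longrightarrow> v \<in> X \<Longrightarrow> mnorm (JF u - JF v) \<le> L * norm (u - v)"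
    and "0 \<le> L" and seg: "closed_segment x z \<subseteq> X"
  shows "norm (F z - F x - JF x *v (z - x)) \<le> L * (norm (z - x))\<^sup>2"
proof -
  have "norm (F z - F x - JF x *v (z - x)) \<le> norm (z - x) * (L * norm (z - x))"
  proof (rule differentiable_bound_linearization[where S = "closed_segment x z" and f' = "\<lambda>w h. JF w *v h"])
    fix t :: real assume "t \<in> {0..1}"
    then show "x + t *\<^sub>R (z - x) \<in> closed_segment x z"
      unfolding in_segment by (intro exI[of _ t]) (auto simp: algebra_simps)
  next
    fix w assume "w \<in> closed_segment x z"
    then have "w \<in> X" "x \<in> X" and "norm (w - x) \<le> norm (z - x)"
      using seg dist_in_closed_segment[of w x z] by (auto simp: dist_norm norm_minus_commute)
    then have "mnorm (JF w - JF x) \<le> L * norm (z - x)"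
      using JF_lip mult_left_mono[OF _ \<open>0 \<le> L\<close>] by (meson order_trans)
    moreover have "(\<lambda>h. JF w *v h) - (\<lambda>h. JF x *v h) = (\<lambda>h. (JF w - JF x) *v h)"
      by (auto simp: matrix_vector_mult_diff_rdistrib)
    ultimately show "onorm ((\<lambda>h. JF w *v h) - (\<lambda>h. JF x *v h)) \<le> L * norm (z - x)"
      unfolding mnorm_def by simp
  qed (auto intro: has_derivative_at_withinI[OF F_deriv])
  then show ?thesis
    by (simp add: power2_eq_square algebra_simps)
qed

lemma ex_pos_coeffs_quartic_bound:
  fixes f a d :: "'a \<Rightarrow> real"
  assumes bound: "\<forall>\<^sub>F k in net. f k \<le> A * a k ^ 4 + (B * d k + C) * a k ^ 3 + D * (d k)\<^sup>2 * a k ^ 2"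
    and "0 < A" "0 < B" "0 < C" "0 < D" "\<And>k. 0 \<le> d k"
  shows "\<exists>L1' L2' L3' L4' L5'. L1' > 0 \<and> L2' > 0 \<and> L3' > 0 \<and> L4' > 0 \<and> L5' > 0 \<and>
           eventually (\<lambda>k. f k \<le> L1' * a k ^ 4 + (L2' * d k + L3') * a k ^ 3
                               + (L4' * d k + L5' * (d k)\<^sup>2) * a k ^ 2) net"
proof (intro exI conjI)
  show "\<forall>\<^sub>F k in net. f k \<le> A * a k ^ 4 + (B * d k + C) * a k ^ 3 + (1 * d k + D * (d k)\<^sup>2) * a k ^ 2"
    using bound
  proof eventually_elim
    case (elim k)
    have "0 \<le> d k * a k ^ 2"
      using \<open>0 \<le> d k\<close> by simp
    with elim show ?case
      by (simp add: distrib_right)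
  qed
qed (use assms in auto)

locale locally_strongly_monotone_vip =
  fixes C :: "(real^'n) set" and F :: "real^'n \<Rightarrow> real^'n" and JF :: "real^'n \<Rightarrow> real^'n^'n"
    and xs :: "real^'n" and X :: "(real^'n) set" and L1 L2 \<mu> :: real
  assumes C_closed: "closed C" and C_convex: "convex C"
    and F_deriv: "\<And>y. (F has_derivative (\<lambda>h. JF y *v h)) (at y)"
    and xs_sol: "vip_sol F C xs" and xs_in: "xs \<in> X"
    and L1_pos: "L1 > 0" and L2_pos: "L2 > 0" and \<mu>_pos: "\<mu> > 0"
    and F_lip: "\<And>u v. u \<in> X \<Longrightarrow> v \<in> X \<Longrightarrow> norm (F u - F v) \<le> L1 * norm (u - v)"
    and JF_lip: "\<And>u v. u \<in> X \<Longrightarrow> v \<in> X \<Longrightarrow> mnorm (JF u - JF v) \<le> L2 * norm (u - v)"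
    and JF_strong: "\<And>u d. u \<in> X \<Longrightarrow> (JF u *v d) \<bullet> d \<ge> \<mu> * (norm d)\<^sup>2"
begin

definition model_bound :: real where
  "model_bound = mnorm (JF xs) + L2 + \<mu>"

definition step_tol :: real where
  "step_tol = min 1 (\<mu> / (4 * (model_bound + 2)))"

definition step_const :: real where
  "step_const = max 1 (4 * (3 * L1 + model_bound + 1) / \<mu>)"

lemma model_bound_nonneg: "0 \<le> model_bound"
  unfolding model_bound_def using mnorm_nonneg[of "JF xs"] L2_pos \<mu>_pos by linarith

lemma step_tol_pos: "0 < step_tol"
  unfolding step_tol_def using model_bound_nonneg \<mu>_pos by simp

lemma step_tol_le: "step_tol * (model_bound + 2) \<le> \<mu> / 4"
proof -
  have "step_tol \<le> \<mu> / (4 * (model_bound + 2))"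
    unfolding step_tol_def by simp
  then show ?thesis
    using model_bound_nonneg by (simp add: field_simps)
qed

lemma step_const_ge_1: "1 \<le> step_const"
  unfolding step_const_def by simp

lemma step_length_le:
  assumes "x \<in> X" "norm (x - xs) \<le> 1"
    and \<delta>: "norm ((B - JF x) *v (z - x)) \<le> \<delta> * norm (z - x)" "\<delta> \<le> \<mu> / 2"
    and m: "0 \<le> m" "m \<le> \<mu> / 2"
    and e_small: "norm (z - closest_point C (z - (F x + (B + mat m) *v (z - x))))
                    \<le> step_tol * norm (z - x)"
  shows "norm (z - x) \<le> step_const * norm (x - xs)"
proof -
  have "mnorm (JF x) \<le> mnorm (JF xs) + mnorm (JF x - JF xs)"
    using mnorm_add_le[of "JF xs" "JF x - JF xs"] by simp
  also have "\<dots> \<le> mnorm (JF xs) + L2"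
    using JF_lip[OF \<open>x \<in> X\<close> xs_in] mult_left_mono[OF \<open>norm (x - xs) \<le> 1\<close> less_imp_le[OF L2_pos]]
    by simp
  finally have bounded: "norm ((B + mat m) *v (z - x)) \<le> model_bound * norm (z - x)"
    using regularized_model_bounded[OF \<delta>(1) m(1)] \<delta>(2) m(2)
      mult_right_mono[of "mnorm (JF x) + \<delta> + m" model_bound "norm (z - x)"]
    unfolding model_bound_def by simp
  have coercive: "\<mu> / 2 * (norm (z - x))\<^sup>2 \<le> ((B + mat m) *v (z - x)) \<bullet> (z - x)"
    using regularized_model_coercive[OF JF_strong[OF \<open>x \<in> X\<close>] \<delta> m(1)] .
  have tol: "step_tol * (model_bound + 2) \<le> \<mu> / 2 / 2"
    using step_tol_le by simp
  have "norm (z - x) \<le> max 1 (2 * (3 * L1 + model_bound + 1) / (\<mu> / 2)) * norm (x - xs)"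
    using inexact_step_length_le[OF C_convex C_closed xs_sol refl e_small _ tol bounded coercive
        F_lip[OF \<open>x \<in> X\<close> xs_in]] L1_pos \<mu>_pos
    unfolding step_tol_def by simp
  then show ?thesis
    unfolding step_const_def by (simp add: field_simps)
qed

lemma merit_at_inexact_step:
  assumes "\<alpha> > 0" "z \<in> C" and seg: "closed_segment x z \<subseteq> X"
    and step: "norm (z - x) \<le> K * norm (x - xs)"
    and p_def: "p = F x + (B + mat m) *v (z - x)"
    and e_def: "e = z - closest_point C (z - p)"
    and e_small: "norm e \<le> s * norm (z - x)"
    and e_dir: "e \<bullet> (p + z - x) \<le> s * (norm (z - x))\<^sup>2"
    and "0 \<le> s" "s \<le> C1 * norm (x - xs)" "0 \<le> m" "m \<le> C1 * norm (x - xs)"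
    and \<delta>: "norm ((B - JF x) *v (z - x)) \<le> \<delta> * norm (z - x)" "0 \<le> \<delta>"
  defines "G \<equiv> 2 * C1 * K + L2 * K\<^sup>2"
  shows "merit F C \<alpha> z \<le> G\<^sup>2 / (2 * \<alpha>) * norm (x - xs) ^ 4
           + (G * K / \<alpha> * \<delta> + 2 * C1 * K\<^sup>2) * norm (x - xs) ^ 3
           + K\<^sup>2 / (2 * \<alpha>) * \<delta>\<^sup>2 * norm (x - xs) ^ 2"
proof -
  have "F z - p = (F z - F x - JF x *v (z - x)) - (B - JF x) *v (z - x) - m *\<^sub>R (z - x)"
    unfolding p_def regularized_model_split[of B m _ "JF x"] by (simp add: algebra_simps)
  then have "norm (F z - p) \<le> L2 * (norm (z - x))\<^sup>2 + \<delta> * norm (z - x) + m * norm (z - x)"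
    using linearization_error_le[OF F_deriv JF_lip _ seg] L2_pos \<delta>(1) \<open>0 \<le> m\<close>
    by (smt (verit) norm_triangle_ineq4 norm_scaleR)
  then show ?thesis
    using polynomial_bound_of_step_estimates[OF
        merit_le_inexact_residuals[OF C_convex C_closed \<open>z \<in> C\<close> \<open>\<alpha> > 0\<close> e_def e_small e_dir]]
      e_small step assms(9-12) \<delta>(2) L2_pos \<open>\<alpha> > 0\<close>
    unfolding G_def by (smt (verit) norm_ge_zero)
qed

lemma merit_at_step_near_solution:
  assumes "\<alpha> > 0" "cball xs r \<subseteq> X" "z \<in> C"
    and near: "norm (x - xs) \<le> min 1 (r / (step_const + 1))"
    and \<rho>: "0 \<le> \<rho>" "\<rho> \<le> min 1 (2 * step_tol / \<mu>)"
    and m: "0 < m" "m \<le> C1 * norm (x - xs)" "m < \<mu> / 2"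
    and \<delta>: "norm ((B - JF x) *v (z - x)) \<le> \<delta> * norm (z - x)" "0 < \<delta>" "\<delta> \<le> \<mu> / 16"
    and p_def: "p = F x + (B + mat m) *v (z - x)"
    and e_small: "norm (z - closest_point C (z - p)) \<le> \<rho> * m * norm (z - x)"
    and e_dir: "(z - closest_point C (z - p)) \<bullet> (p + z - x) \<le> \<rho> * m * (norm (z - x))\<^sup>2"
  defines "G \<equiv> 2 * C1 * step_const + L2 * step_const\<^sup>2"
  shows "merit F C \<alpha> z \<le> G\<^sup>2 / (2 * \<alpha>) * norm (x - xs) ^ 4
           + (G * step_const / \<alpha> * \<delta> + 2 * C1 * step_const\<^sup>2) * norm (x - xs) ^ 3
           + step_const\<^sup>2 / (2 * \<alpha>) * \<delta>\<^sup>2 * norm (x - xs) ^ 2"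
proof -
  have "(step_const + 1) * norm (x - xs) \<le> r"
    using near step_const_ge_1 by (simp add: field_simps)
  moreover have "norm (x - xs) \<le> (step_const + 1) * norm (x - xs)"
    using mult_right_mono[of 1 "step_const + 1" "norm (x - xs)"] step_const_ge_1 by simp
  ultimately have "x \<in> cball xs r"
    by (simp add: dist_norm norm_minus_commute)
  then have "x \<in> X"
    using \<open>cball xs r \<subseteq> X\<close> by blast
  have \<rho>_tol: "\<rho> \<le> 2 * step_tol / \<mu>"
    using \<rho>(2) by simp
  have "\<rho> * m \<le> 2 * step_tol / \<mu> * (\<mu> / 2)"
    using mult_mono[OF \<rho>_tol less_imp_le[OF m(3)] _ less_imp_le[OF m(1)]] step_tol_pos \<mu>_pos
    by simp
  then have "\<rho> * m \<le> step_tol"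
    using \<mu>_pos by simp
  then have e_tol: "norm (z - closest_point C (z - p)) \<le> step_tol * norm (z - x)"
    using e_small mult_right_mono[of "\<rho> * m" step_tol "norm (z - x)"] by simp
  have step: "norm (z - x) \<le> step_const * norm (x - xs)"
    using step_length_le[OF \<open>x \<in> X\<close> _ \<delta>(1) _ less_imp_le[OF m(1)] less_imp_le[OF m(3)]]
      e_tol near \<delta>(3) \<mu>_pos
    unfolding p_def by simp
  have "dist xs z \<le> (step_const + 1) * norm (x - xs)"
    using norm_triangle_ineq[of "xs - x" "x - z"] step
    by (simp add: dist_norm norm_minus_commute algebra_simps)
  then have "z \<in> cball xs r"
    using \<open>(step_const + 1) * norm (x - xs) \<le> r\<close> by simp
  then have seg: "closed_segment x z \<subseteq> X"
    using closed_segment_subset[OF \<open>x \<in> cball xs r\<close> _ convex_cball] \<open>cball xs r \<subseteq> X\<close> by blast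
  have "\<rho> * m \<le> m"
    using mult_left_le_one_le[of m \<rho>] \<rho> m(1) by simp
  then have "\<rho> * m \<le> C1 * norm (x - xs)"
    using m(2) by linarith
  then show ?thesis
    using merit_at_inexact_step[OF \<open>\<alpha> > 0\<close> \<open>z \<in> C\<close> seg step p_def refl e_small e_dir]
      \<rho>(1) m \<delta>(1,2) unfolding G_def by simp
qed

end

theorem mainTheorem5:
  fixes C :: "(real^'n) set" and F :: "real^'n \<Rightarrow> real^'n"
    and JF :: "real^'n \<Rightarrow> real^'n^'n"
    and xs :: "real^'n" and X :: "(real^'n) set"
    and L1 L2 \<mu> D C1 C2 :: real
    and x z zh :: "nat \<Rightarrow> real^'n" and B :: "nat \<Rightarrow> real^'n^'n"
    and mu \<rho> \<delta> :: "nat \<Rightarrow> real"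
  defines "\<phi> \<equiv> (\<lambda>k w. F (x k) + (B k + mat (mu k)) *v (w - x k))"
  assumes C_ne: "C \<noteq> {}" and C_closed: "closed C" and C_convex: "convex C"
    and F_deriv: "\<And>y. (F has_derivative (\<lambda>h. JF y *v h)) (at y)"
    and JF_cont: "continuous_on UNIV JF"
    and xs_sol: "vip_sol F C xs"
    and X_nhd: "xs \<in> interior X"
    and L1_pos: "L1 > 0" and L2_pos: "L2 > 0" and mu_const_pos: "\<mu> > 0"
    and F_lip: "\<And>u v. u \<in> X \<Longrightarrow> v \<in> X \<Longrightarrow> norm (F u - F v) \<le> L1 * norm (u - v)"
    and JF_lip: "\<And>u v. u \<in> X \<Longrightarrow> v \<in> X \<Longrightarrow> mnorm (JF u - JF v) \<le> L2 * norm (u - v)"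
    and JF_strong: "\<And>u d. u \<in> X \<Longrightarrow> (JF u *v d) \<bullet> d \<ge> \<mu> * (norm d)^2"
    and x_in: "\<And>k. x k \<in> C" and x_lim: "x \<longlonglongrightarrow> xs"
    and mu_pos: "\<And>k. mu k > 0" and rho_nonneg: "\<And>k. \<rho> k \<ge> 0"
    and delta_pos: "\<And>k. \<delta> k > 0"
    and z_in: "\<And>k. z k \<in> C"
    and z_inexact1: "eventually (\<lambda>k. norm (z k - closest_point C (z k - \<phi> k (z k)))
                        \<le> \<rho> k * mu k * norm (z k - x k)) sequentially"
    and z_inexact2: "eventually (\<lambda>k. (z k - closest_point C (z k - \<phi> k (z k))) \<bullet> (\<phi> k (z k) + z k - x k)
                        \<le> \<rho> k * mu k * (norm (z k - x k))^2) sequentially"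
    and zh_sol: "eventually (\<lambda>k. vip_sol (\<phi> k) C (zh k)) sequentially"
    and D_pos: "D > 0" and C1_pos: "C1 > 0" and C2_pos: "C2 > 0"
    and H1: "eventually (\<lambda>k. mnorm (B k - JF (x k)) \<le> D) sequentially"
    and H2: "mu \<in> O(\<lambda>k. resid F C (x k))"
    and H3: "eventually (\<lambda>k. mu k \<le> C1 * norm (x k - xs)) sequentially"
    and H4: "\<rho> \<longlonglongrightarrow> 0"
    and H5: "eventually (\<lambda>k. pos_def (B k + mat (mu k))) sequentially"
    and H6: "eventually (\<lambda>k. (1 + mnorm (B k + mat (mu k))) / min_eig_sym (B k + mat (mu k)) \<le> C2) sequentially"
    and H7: "eventually (\<lambda>k. norm ((B k - JF (x k)) *v (z k - x k)) \<le> \<delta> k * norm (z k - x k)) sequentially"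
    and H8: "eventually (\<lambda>k. mu k < \<mu> / 2) sequentially"
    and H9: "eventually (\<lambda>k. \<delta> k \<le> \<mu> / 16) sequentially"
  shows "\<forall>\<alpha>>0. \<exists>L1' L2' L3' L4' L5'. L1' > 0 \<and> L2' > 0 \<and> L3' > 0 \<and> L4' > 0 \<and> L5' > 0 \<and>
           eventually (\<lambda>k. merit F C \<alpha> (z k)
              \<le> L1' * norm (x k - xs)^4 + (L2' * \<delta> k + L3') * norm (x k - xs)^3
                 + (L4' * \<delta> k + L5' * (\<delta> k)^2) * norm (x k - xs)^2) sequentially"
proof (intro allI impI)
  fix \<alpha> :: real assume "\<alpha> > 0"
  interpret locally_strongly_monotone_vip C F JF xs X L1 L2 \<mu>
    using C_closed C_convex F_deriv xs_sol interior_subset[of X] X_nhd L1_pos L2_pos mu_const_pos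
      F_lip JF_lip JF_strong
    by unfold_locales auto
  obtain r where "r > 0" "cball xs r \<subseteq> X"
    using X_nhd mem_interior_cball by blast
  define G where "G = 2 * C1 * step_const + L2 * step_const\<^sup>2"
  have "\<forall>\<^sub>F k in sequentially. norm (x k - xs) \<le> min 1 (r / (step_const + 1))"
    using x_lim \<open>r > 0\<close> step_const_ge_1 unfolding tendsto_iff
    by (auto simp: dist_norm elim!: allE[of _ "min 1 (r / (step_const + 1))"] eventually_mono)
  moreover have "\<forall>\<^sub>F k in sequentially. \<rho> k \<le> min 1 (2 * step_tol / \<mu>)"
    using order_tendstoD(2)[OF H4, of "min 1 (2 * step_tol / \<mu>)"] step_tol_pos mu_const_pos
    by (auto elim: eventually_mono)
  ultimately have bound: "\<forall>\<^sub>F k in sequentially. merit F C \<alpha> (z k)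
      \<le> G\<^sup>2 / (2 * \<alpha>) * norm (x k - xs) ^ 4
         + (G * step_const / \<alpha> * \<delta> k + 2 * C1 * step_const\<^sup>2) * norm (x k - xs) ^ 3
         + step_const\<^sup>2 / (2 * \<alpha>) * (\<delta> k)\<^sup>2 * norm (x k - xs) ^ 2"
    using z_inexact1 z_inexact2 H3 H7 H8 H9 unfolding \<phi>_def G_def
    by eventually_elim
      (rule merit_at_step_near_solution[OF \<open>\<alpha> > 0\<close> \<open>cball xs r \<subseteq> X\<close> z_in _ rho_nonneg _ mu_pos _ _ _
          delta_pos _ refl], simp_all)
  have "0 < G"
    unfolding G_def using C1_pos L2_pos step_const_ge_1 by (simp add: add_pos_nonneg)
  then show "\<exists>L1' L2' L3' L4' L5'. L1' > 0 \<and> L2' > 0 \<and> L3' > 0 \<and> L4' > 0 \<and> L5' > 0 \<and>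
           eventually (\<lambda>k. merit F C \<alpha> (z k)
              \<le> L1' * norm (x k - xs)^4 + (L2' * \<delta> k + L3') * norm (x k - xs)^3
                 + (L4' * \<delta> k + L5' * (\<delta> k)^2) * norm (x k - xs)^2) sequentially"
    using \<open>\<alpha> > 0\<close> C1_pos step_const_ge_1 delta_pos
    by (intro ex_pos_coeffs_quartic_bound[OF bound]) (auto intro: less_imp_le)
qed

end
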